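(* For every $k\ge2$, the Natarajan dimension of the function class $\mathcal G_k$ (viewed as functions from $\Delta_k$ to the label set $\{e_1,\dots,e_k\}\cong[k]$) equals $k-1$.
   Context: $\Delta_k=\{x\in\mathbb R^k:x\ge0,\sum_ix_i=1\}$, $e_1,\dots,e_k$ the standard basis of $\mathbb R^k$. For $\psi\in\mathbb R^k$, $g_\psi(x):=e_{i^*}$ where $i^*$ is the smallest index minimizing $\|x-e_i\|_1-\psi_i$ over $i\in[k]$; $\mathcal G_k:=\{g_\psi:\psi\in\mathbb R^k\}$. A finite set $C\subseteq\Delta_k$ is N-shattered by a class $\mathcal H$ if there exist $f_0,f_1:C\to\{e_1,\dots,e_k\}$ with $f_0(x)\ne f_1(x)$ for all $x\in C$ such that for every $B\subseteq C$ there is $h\in\mathcal H$ with $h(x)=f_0(x)$ for $x\in B$ and $h(x)=f_1(x)$ for $x\in C\setminus B$. The Natarajan dimension $d_N(\mathcal H)$ is the largest cardinality of an N-shattered set. *)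

theory Defs
  imports "HOL-Analysis.Analysis"
begin

text \<open>Points of R^k are represented as functions nat => real, coordinates indexed
  0..k-1 (0-indexed), and vanishing outside {0..<k}.\<close>

definition prob_simplex :: "nat \<Rightarrow> (nat \<Rightarrow> real) set" where
  "prob_simplex k = {x. (\<forall>i<k. 0 \<le> x i) \<and> (\<forall>i\<ge>k. x i = 0) \<and> (\<Sum>i<k. x i) = 1}"

definition basis_vec :: "nat \<Rightarrow> (nat \<Rightarrow> real)" where
  "basis_vec i = (\<lambda>j. if j = i then 1 else 0)"

definition labels :: "nat \<Rightarrow> (nat \<Rightarrow> real) set" where
  "labels k = basis_vec ` {..<k}"

definition l1_dist :: "nat \<Rightarrow> (nat \<Rightarrow> real) \<Rightarrow> (nat \<Rightarrow> real) \<Rightarrow> real" where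
  "l1_dist k x y = (\<Sum>j<k. \<bar>x j - y j\<bar>)"

definition g_fun :: "nat \<Rightarrow> (nat \<Rightarrow> real) \<Rightarrow> (nat \<Rightarrow> real) \<Rightarrow> (nat \<Rightarrow> real)" where
  "g_fun k psi x = basis_vec (LEAST i. i < k \<and>
      (\<forall>j<k. l1_dist k x (basis_vec i) - psi i \<le> l1_dist k x (basis_vec j) - psi j))"

definition G_class :: "nat \<Rightarrow> ((nat \<Rightarrow> real) \<Rightarrow> (nat \<Rightarrow> real)) set" where
  "G_class k = {g_fun k psi | psi. True}"

definition N_shattered :: "('a \<Rightarrow> 'b) set \<Rightarrow> 'b set \<Rightarrow> 'a set \<Rightarrow> bool" where
  "N_shattered H Y C \<longleftrightarrow> finite C \<and>
     (\<exists>f0 f1. (\<forall>x\<in>C. f0 x \<in> Y \<and> f1 x \<in> Y \<and> f0 x \<noteq> f1 x) \<and>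
        (\<forall>B\<subseteq>C. \<exists>h\<in>H. (\<forall>x\<in>B. h x = f0 x) \<and> (\<forall>x\<in>C - B. h x = f1 x)))"

definition natarajan_dim_eq :: "('a \<Rightarrow> 'b) set \<Rightarrow> 'a set \<Rightarrow> 'b set \<Rightarrow> nat \<Rightarrow> bool" where
  "natarajan_dim_eq H X Y d \<longleftrightarrow>
     (\<exists>C. C \<subseteq> X \<and> N_shattered H Y C \<and> card C = d) \<and>
     (\<forall>C. C \<subseteq> X \<and> N_shattered H Y C \<longrightarrow> card C \<le> d)"

end

theory Submission
  imports Defs
begin

text \<open>Labels are indexed from 0.  At the vertex e_i the score of label j is 2 [j \<noteq> i] - psi_j,
  so the vertices e_1, ..., e_(k-1) are N-shattered with label e_i against e_0: a small offset
  penalty on label i lets e_i win, a large one lets e_0 win.  Conversely, let labels p x \<noteq> q x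
  be shattered on a set C.  The margin of q x over p x is a fixed function of x minus
  psi (q x) - psi (p x).  These offset differences lie in a space of dimension k - 1, so if
  card C \<ge> k some weights c, positive at some x0, annihilate them, and the c-weighted sum of
  margins does not depend on psi.  Realising p exactly on {c > 0} makes every summand
  nonnegative, realising p exactly on {c < 0} makes every summand nonpositive; hence all
  summands vanish, and at x0 the smallest-index tie-breaking has to prefer p x0 over q x0 in the
  first case and q x0 over p x0 in the second.\<close>

lemma inj_basis_vec: "inj basis_vec"
proof (rule injI)
  fix a b assume "basis_vec a = basis_vec b"
  then have "basis_vec a a = basis_vec b a" by simp
  then show "a = b" by (simp add: basis_vec_def split: if_splits)
qed

lemma sum_mult_basis_vec: "j < k \<Longrightarrow> (\<Sum>i<k. f i * basis_vec j i) = (f j :: real)"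
  by (simp add: basis_vec_def if_distrib[of "\<lambda>t. _ * t"] sum.delta' cong: if_cong)

lemma sum_basis_vec: "j < k \<Longrightarrow> (\<Sum>i<k. basis_vec j i) = (1::real)"
  using sum_mult_basis_vec[of j k "\<lambda>_. 1"] by simp

lemma basis_vec_in_prob_simplex: "j < k \<Longrightarrow> basis_vec j \<in> prob_simplex k"
  using sum_basis_vec[of j k] by (auto simp: prob_simplex_def basis_vec_def)

lemma l1_dist_basis_vec:
  assumes "i < k" "j < k"
  shows "l1_dist k (basis_vec i) (basis_vec j) = (if i = j then 0 else 2)"
proof (cases "i = j")
  case False
  then have "l1_dist k (basis_vec i) (basis_vec j) = (\<Sum>l<k. basis_vec i l + basis_vec j l)"
    unfolding l1_dist_def by (intro sum.cong) (auto simp: basis_vec_def)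
  then show ?thesis using assms False by (simp add: sum.distrib sum_basis_vec)
qed (simp add: l1_dist_def)

definition g_score :: "nat \<Rightarrow> (nat \<Rightarrow> real) \<Rightarrow> (nat \<Rightarrow> real) \<Rightarrow> nat \<Rightarrow> real" where
  "g_score k psi x i = l1_dist k x (basis_vec i) - psi i"

lemma g_fun_eq_basis_vec_iff:
  assumes "0 < k"
  shows "g_fun k psi x = basis_vec a \<longleftrightarrow>
    a < k \<and> (\<forall>j<k. g_score k psi x a \<le> g_score k psi x j) \<and> (\<forall>j<a. g_score k psi x a < g_score k psi x j)"
proof -
  let ?s = "g_score k psi x"
  let ?P = "\<lambda>i. i < k \<and> (\<forall>j<k. ?s i \<le> ?s j)"
  obtain m where "is_arg_min ?s (\<lambda>i. i < k) m"
    using ex_is_arg_min_if_finite[of "{..<k}" ?s] assms by auto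
  then have "?P m" by (auto simp: is_arg_min_linorder)
  have "g_fun k psi x = basis_vec (LEAST i. ?P i)"
    by (simp add: g_fun_def g_score_def)
  then have "g_fun k psi x = basis_vec a \<longleftrightarrow> (LEAST i. ?P i) = a"
    using inj_basis_vec by (simp add: inj_eq)
  also have "\<dots> \<longleftrightarrow> ?P a \<and> (\<forall>j<a. \<not> ?P j)"
  proof
    assume "(LEAST i. ?P i) = a"
    then show "?P a \<and> (\<forall>j<a. \<not> ?P j)"
      using LeastI[of ?P m, OF \<open>?P m\<close>] not_less_Least[of _ ?P] by auto
  next
    assume "?P a \<and> (\<forall>j<a. \<not> ?P j)"
    then show "(LEAST i. ?P i) = a" by (intro Least_equality) (auto intro: leI)
  qed
  also have "\<dots> \<longleftrightarrow> ?P a \<and> (\<forall>j<a. ?s a < ?s j)"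
  proof -
    have "\<not> ?P j \<longleftrightarrow> ?s a < ?s j" if "?P a" "j < a" for j
      using that by (auto simp: not_le intro: order.strict_trans1)
    then show ?thesis by blast
  qed
  finally show ?thesis by simp
qed

lemma g_fun_eq_basis_vecI:
  assumes "a < k" "\<And>j. j < k \<Longrightarrow> j \<noteq> a \<Longrightarrow> g_score k psi x a < g_score k psi x j"
  shows "g_fun k psi x = basis_vec a"
proof -
  have "g_score k psi x a \<le> g_score k psi x j" if "j < k" for j
    using assms(2)[OF that] by (cases "j = a") auto
  then show ?thesis
    using assms by (subst g_fun_eq_basis_vec_iff) auto
qed

lemma N_shattered_basis_vecs: "N_shattered (G_class k) (labels k) (basis_vec ` {1..<k})"
  unfolding N_shattered_def
proof (intro conjI exI ballI allI impI)
  let ?C = "basis_vec ` {1..<k}"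
  show "finite ?C" by simp
  fix x assume "x \<in> ?C"
  then show "x \<in> labels k" "basis_vec 0 \<in> labels k" "x \<noteq> basis_vec 0"
    using inj_basis_vec by (auto simp: labels_def inj_eq)
next
  let ?C = "basis_vec ` {1..<k}"
  fix B assume "B \<subseteq> ?C"
  \<comment> \<open>scores at the vertex e_i: 2 for label 0, 1 or 3 for label i according as e_i \<in> B or not, at least 3 otherwise\<close>
  define psi :: "nat \<Rightarrow> real" where
    "psi j = (if j = 0 then 0 else if basis_vec j \<in> B then -1 else -3)" for j
  have g_vertex: "g_fun k psi (basis_vec i) = (if basis_vec i \<in> B then basis_vec i else basis_vec 0)"
    if "1 \<le> i" "i < k" for i
    using that by (auto intro!: g_fun_eq_basis_vecI simp: g_score_def l1_dist_basis_vec psi_def)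
  show "\<exists>h\<in>G_class k. (\<forall>x\<in>B. h x = x) \<and> (\<forall>x\<in>?C - B. h x = basis_vec 0)"
  proof (intro bexI conjI ballI)
    show "g_fun k psi \<in> G_class k" by (auto simp: G_class_def)
    show "g_fun k psi x = x" if "x \<in> B" for x
      using that \<open>B \<subseteq> ?C\<close> g_vertex by auto
    show "g_fun k psi x = basis_vec 0" if "x \<in> ?C - B" for x
      using that g_vertex by auto
  qed
qed

lemma finite_support_dependent:
  fixes v :: "'a \<Rightarrow> nat \<Rightarrow> real"
  assumes "finite C" "\<forall>x\<in>C. \<forall>i\<ge>m. v x i = 0" "m < card C"
  shows "\<exists>c. (\<exists>x\<in>C. c x \<noteq> 0) \<and> (\<forall>i. (\<Sum>x\<in>C. c x * v x i) = 0)"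
  using assms
proof (induction m arbitrary: C v)
  case 0
  then obtain x where "x \<in> C" by fastforce
  with 0 show ?case by (intro exI[of _ "\<lambda>_. 1"]) auto
next
  case (Suc m)
  have vanish: "\<forall>x\<in>C. \<forall>i>m. v x i = 0" using Suc.prems(2) by (simp add: Suc_le_eq)
  show ?case
  proof (cases "\<forall>x\<in>C. v x m = 0")
    case True
    with vanish have "\<forall>x\<in>C. \<forall>i\<ge>m. v x i = 0" by (auto simp: le_less)
    with Suc.IH[OF Suc.prems(1)] Suc.prems(3) show ?thesis by simp
  next
    case False
    then obtain y where y: "y \<in> C" "v y m \<noteq> 0" by auto
    \<comment> \<open>Gaussian elimination: clear coordinate m with v y and recurse on C - {y}\<close>
    define w where "w x i = v x i - (v x m / v y m) * v y i" for x i
    have "\<forall>x\<in>C - {y}. \<forall>i\<ge>m. w x i = 0"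
      using vanish y by (auto simp: w_def le_less)
    moreover have "m < card (C - {y})" using Suc.prems(1,3) y(1) by simp
    ultimately obtain c' where c': "\<exists>x\<in>C - {y}. c' x \<noteq> 0" "\<forall>i. (\<Sum>x\<in>C - {y}. c' x * w x i) = 0"
      using Suc.IH[of "C - {y}" w] Suc.prems(1) by blast
    define c where "c x = (if x = y then - (\<Sum>z\<in>C - {y}. c' z * v z m) / v y m else c' x)" for x
    show ?thesis
    proof (intro exI conjI allI)
      show "\<exists>x\<in>C. c x \<noteq> 0" using c'(1) by (auto simp: c_def)
      fix i
      have "(\<Sum>x\<in>C. c x * v x i) = c y * v y i + (\<Sum>x\<in>C - {y}. c x * v x i)"
        using sum.remove[OF Suc.prems(1) y(1)] by simp
      also have "(\<Sum>x\<in>C - {y}. c x * v x i)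
          = (\<Sum>x\<in>C - {y}. c' x * w x i + c' x * v x m / v y m * v y i)"
        by (intro sum.cong) (auto simp: c_def w_def algebra_simps)
      also have "\<dots> = (\<Sum>x\<in>C - {y}. c' x * w x i) + (\<Sum>x\<in>C - {y}. c' x * v x m) / v y m * v y i"
        by (simp add: sum.distrib sum_distrib_right sum_divide_distrib)
      finally show "(\<Sum>x\<in>C. c x * v x i) = 0" using c'(2) by (simp add: c_def)
    qed
  qed
qed

lemma offset_differences_dependent:
  fixes p q :: "'a \<Rightarrow> nat"
  assumes "finite C" "0 < k" "k \<le> card C" and pq: "\<And>x. x \<in> C \<Longrightarrow> p x < k \<and> q x < k"
  shows "\<exists>c x0. x0 \<in> C \<and> 0 < c x0 \<and> (\<forall>psi::nat \<Rightarrow> real. (\<Sum>x\<in>C. c x * (psi (p x) - psi (q x))) = 0)"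
proof -
  define v where "v x i = (if i < k - 1 then basis_vec (p x) i - basis_vec (q x) i else 0)" for x i
  obtain c0 x0 where x0: "x0 \<in> C" "c0 x0 \<noteq> 0" and c0: "\<And>i. (\<Sum>x\<in>C. c0 x * v x i) = 0"
  proof -
    have "k - 1 < card C" using assms by linarith
    then show thesis
      using finite_support_dependent[of C "k - 1" v] that assms(1) by (auto simp: v_def)
  qed
  define c where "c x = sgn (c0 x0) * c0 x" for x
  define d where "d i = (\<Sum>x\<in>C. c x * (basis_vec (p x) i - basis_vec (q x) i))" for i
  have d_lower: "d i = 0" if "i < k - 1" for i
    using c0[of i] that by (simp add: d_def c_def v_def mult.assoc flip: sum_distrib_left)
  \<comment> \<open>the last coordinate vanishes too, since every e_(p x) - e_(q x) has coordinate sum 0\<close>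
  have "(\<Sum>i<k. d i) = (\<Sum>x\<in>C. c x * (\<Sum>i<k. basis_vec (p x) i - basis_vec (q x) i))"
    unfolding d_def by (simp add: sum_distrib_left sum.swap[of _ C])
  also have "\<dots> = 0" using pq by (simp add: sum_subtractf sum_basis_vec)
  finally have "d (k - 1) = 0"
    using d_lower \<open>0 < k\<close> sum.lessThan_Suc[of d "k - 1"] by simp
  with d_lower have d_zero: "d i = 0" if "i < k" for i
    using that by (cases "i < k - 1") (auto simp: not_less dest: le_antisym[rotated])
  have "(\<Sum>x\<in>C. c x * (psi (p x) - psi (q x))) = 0" for psi :: "nat \<Rightarrow> real"
  proof -
    have "(\<Sum>x\<in>C. c x * (psi (p x) - psi (q x)))
        = (\<Sum>x\<in>C. c x * (\<Sum>i<k. psi i * (basis_vec (p x) i - basis_vec (q x) i)))"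
      using pq by (intro sum.cong) (auto simp: right_diff_distrib sum_subtractf sum_mult_basis_vec)
    also have "\<dots> = (\<Sum>i<k. psi i * d i)"
      unfolding d_def by (simp add: sum_distrib_left sum.swap[of _ C] mult.left_commute)
    finally show ?thesis using d_zero by simp
  qed
  moreover have "0 < c x0" using x0(2) by (simp add: c_def sgn_real_def)
  ultimately show ?thesis using x0(1) by blast
qed

lemma g_fun_eq_basis_vecD:
  assumes "0 < k" "g_fun k psi x = basis_vec a" "b < k" "a \<noteq> b"
  shows "g_score k psi x a \<le> g_score k psi x b"
    and "g_score k psi x b = g_score k psi x a \<Longrightarrow> a < b"
  using assms g_fun_eq_basis_vec_iff[OF assms(1), of psi x a] by (auto simp: not_less_iff_gr_or_eq)

lemma N_shattered_G_classE:
  assumes "N_shattered (G_class k) (labels k) C"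
  obtains p q where "finite C" "\<And>x. x \<in> C \<Longrightarrow> p x < k \<and> q x < k \<and> p x \<noteq> q x"
    and "\<And>P. \<exists>psi. \<forall>x\<in>C. g_fun k psi x = basis_vec (if P x then p x else q x)"
proof -
  obtain f0 f1 where fin: "finite C"
    and f: "\<And>x. x \<in> C \<Longrightarrow> f0 x \<in> labels k \<and> f1 x \<in> labels k \<and> f0 x \<noteq> f1 x"
    and shatter: "\<And>B. B \<subseteq> C \<Longrightarrow> \<exists>h\<in>G_class k. (\<forall>x\<in>B. h x = f0 x) \<and> (\<forall>x\<in>C - B. h x = f1 x)"
    using assms unfolding N_shattered_def by blast
  have "\<forall>x\<in>C. \<exists>a b. a < k \<and> b < k \<and> f0 x = basis_vec a \<and> f1 x = basis_vec b"
    using f by (fastforce simp: labels_def)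
  then obtain p q where pq: "\<And>x. x \<in> C \<Longrightarrow> p x < k \<and> q x < k \<and> f0 x = basis_vec (p x) \<and> f1 x = basis_vec (q x)"
    by metis
  have "\<exists>psi. \<forall>x\<in>C. g_fun k psi x = basis_vec (if P x then p x else q x)" for P
  proof -
    obtain h where "h \<in> G_class k" "\<forall>x\<in>{x\<in>C. P x}. h x = f0 x" "\<forall>x\<in>C - {x\<in>C. P x}. h x = f1 x"
      using shatter[of "{x\<in>C. P x}"] by blast
    then show ?thesis using pq by (auto simp: G_class_def)
  qed
  moreover have "p x \<noteq> q x" if "x \<in> C" for x
    using f[OF that] pq[OF that] by auto
  ultimately show thesis using that fin pq by blast
qed

lemma card_le_if_N_shattered:
  assumes "N_shattered (G_class k) (labels k) C"
  shows "card C \<le> k - 1"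
proof (rule ccontr)
  assume "\<not> card C \<le> k - 1"
  obtain p q where fin: "finite C" and pq: "\<And>x. x \<in> C \<Longrightarrow> p x < k \<and> q x < k \<and> p x \<noteq> q x"
    and realize: "\<And>P. \<exists>psi. \<forall>x\<in>C. g_fun k psi x = basis_vec (if P x then p x else q x)"
    using N_shattered_G_classE[OF assms] by blast
  have "C \<noteq> {}" using \<open>\<not> card C \<le> k - 1\<close> by auto
  then have "0 < k" using pq by fastforce
  moreover have "k \<le> card C" using \<open>\<not> card C \<le> k - 1\<close> by linarith
  ultimately obtain c x0 where x0: "x0 \<in> C" "0 < c x0"
    and cancel: "\<And>psi. (\<Sum>x\<in>C. c x * (psi (p x) - psi (q x))) = (0::real)"
    using offset_differences_dependent[OF fin, of k p q] pq by blast
  define margin where "margin psi x = g_score k psi x (q x) - g_score k psi x (p x)" for psi x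
  \<comment> \<open>the offsets enter margin psi x only through psi (p x) - psi (q x), which c cancels\<close>
  have margin_sum: "(\<Sum>x\<in>C. c x * margin psi x) = (\<Sum>x\<in>C. c x * margin (\<lambda>_. 0) x)" for psi
    using cancel[of psi]
    by (simp add: margin_def g_score_def algebra_simps sum.distrib sum_subtractf sum_distrib_left)
  obtain psi1 where psi1: "\<And>x. x \<in> C \<Longrightarrow> g_fun k psi1 x = basis_vec (if 0 < c x then p x else q x)"
    using realize[of "\<lambda>x. 0 < c x"] by blast
  obtain psi2 where psi2: "\<And>x. x \<in> C \<Longrightarrow> g_fun k psi2 x = basis_vec (if c x < 0 then p x else q x)"
    using realize[of "\<lambda>x. c x < 0"] by blast
  have nonneg: "0 \<le> c x * margin psi1 x" if "x \<in> C" for x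
    using g_fun_eq_basis_vecD(1)[OF \<open>0 < k\<close> psi1[OF that]] pq[OF that]
    by (cases "0 < c x") (auto simp: margin_def mult_nonpos_nonpos split: if_splits)
  have nonpos: "c x * margin psi2 x \<le> 0" if "x \<in> C" for x
    using g_fun_eq_basis_vecD(1)[OF \<open>0 < k\<close> psi2[OF that]] pq[OF that]
    by (cases "c x < 0") (auto simp: margin_def mult_nonpos_nonneg mult_nonneg_nonpos split: if_splits)
  have "0 \<le> (\<Sum>x\<in>C. c x * margin psi1 x)" by (intro sum_nonneg nonneg)
  moreover have "(\<Sum>x\<in>C. c x * margin psi2 x) \<le> 0" by (intro sum_nonpos nonpos)
  ultimately have "(\<Sum>x\<in>C. c x * margin psi1 x) = 0" "(\<Sum>x\<in>C. - (c x * margin psi2 x)) = 0"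
    using margin_sum[of psi1] margin_sum[of psi2] by (simp_all add: sum_negf)
  then have "c x0 * margin psi1 x0 = 0" "c x0 * margin psi2 x0 = 0"
    using sum_nonneg_eq_0_iff[OF fin, of "\<lambda>x. c x * margin psi1 x"]
      sum_nonneg_eq_0_iff[OF fin, of "\<lambda>x. - (c x * margin psi2 x)"] nonneg nonpos x0(1)
    by auto
  then have "p x0 < q x0" "q x0 < p x0"
    using g_fun_eq_basis_vecD(2)[OF \<open>0 < k\<close> psi1[OF x0(1)]] g_fun_eq_basis_vecD(2)[OF \<open>0 < k\<close> psi2[OF x0(1)]]
      pq[OF x0(1)] x0(2) by (auto simp: margin_def)
  then show False by simp
qed

theorem theoremD6:
  fixes k :: nat
  assumes "k \<ge> 2"
  shows "natarajan_dim_eq (G_class k) (prob_simplex k) (labels k) (k - 1)"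
proof -
  have "basis_vec ` {1..<k} \<subseteq> prob_simplex k"
    using basis_vec_in_prob_simplex by auto
  moreover have "card (basis_vec ` {1..<k}) = k - 1"
    using card_image[OF inj_on_subset[OF inj_basis_vec]] by simp
  ultimately show ?thesis
    unfolding natarajan_dim_eq_def using N_shattered_basis_vecs card_le_if_N_shattered by blast
qed

end
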